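(* In the setting described in the context, the matrix $\mathbf F$ is invertible with $$\mathbf F^{-1}=\mathbf N^{-1}\mathbf F^T\boldsymbol\Delta,\qquad \det(\mathbf F)=(-1)^{\frac12\textsc{m}(\textsc{m}+1)}\prod_{0\le l\le\textsc{m}}\Big(\frac{N_l}{\Delta_l}\Big)^{1/2},$$ where $\mathbf N=\mathrm{diag}(N_0,\dots,N_{\textsc{m}})$ and $\boldsymbol\Delta=\mathrm{diag}(\Delta_0,\dots,\Delta_{\textsc{m}})$.
   Context: Fix $0<p<1$ and the Jacobi theta functions $\theta_1(z)=2p^{1/4}\sin z\prod_{n\ge1}(1-p^{2n})(1-2p^{2n}\cos 2z+p^{4n})$, $\theta_2(z)=2p^{1/4}\cos z\prod_{n\ge1}(1-p^{2n})(1+2p^{2n}\cos 2z+p^{4n})$, $\theta_3(z)=\prod_{n\ge1}(1-p^{2n})(1+2p^{2n-1}\cos 2z+p^{4n-2})$, $\theta_4(z)=\prod_{n\ge1}(1-p^{2n})(1-2p^{2n-1}\cos 2z+p^{4n-2})$. For $\alpha>0$ set $[z]_1=\theta_1(\frac{\alpha}{2}z)/(\frac{\alpha}{2}\theta_1'(0))$, $[z]_r=\theta_r(\frac{\alpha}{2}z)/\theta_r(0)$ ($r=2,3,4$). Parameters: real $u_1,\dots,u_4,v_1,\dots,v_4$ with $u_r>0$, $|v_r|<u_r+\frac12$ for $r=1,2$; $\textsc{m}\in\mathbb{N}$; $\alpha=\pi/(u_1+u_2+\textsc{m})$; a real $u$ with $u,u+1\notin\frac{2\pi}{\alpha}\mathbb{Z}$.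 Let $\pi_1=\mathrm{id}$, $\pi_2=(12)(34)$, $\pi_3=(13)(24)$, $\pi_4=(14)(23)$ in $S_4$, and $c_r=\frac{2}{[u]_1[u+1]_1}\prod_{s=1}^4[u_{\pi_r(s)}-\frac12]_s[v_{\pi_r(s)}]_s$. For integers $k$ define $a_k=\prod_{r=1}^4\frac{[u_1-u_r+k]_r[u_1-v_r-\frac12+k]_r}{[u_1+k]_r[u_1-\frac12+k]_r}$, $\tilde a_k=\prod_{r=1}^4\frac{[u_2-u_{\pi_2(r)}+k]_r[u_2-v_{\pi_2(r)}-\frac12+k]_r}{[u_2+k]_r[u_2-\frac12+k]_r}$, $b_k=\sum_{r=1}^4c_r\frac{[u_1+k+\frac12+u]_r[u_1+k-\frac12-u]_r}{[u_1+k+\frac12]_r[u_1+k-\frac12]_r}$ (the numbers $a_k,\tilde a_k$, $1\le k\le\textsc{m}$, are positive). Let $\mathbf H$ be the $(\textsc{m}+1)\times(\textsc{m}+1)$ tridiagonal matrix with rows/columns indexed by $0,\dots,\textsc{m}$, $H_{k,k}=b_k$, $H_{k,k-1}=a_k$ ($1\le k\le\textsc{m}$), $H_{k,k+1}=\tilde a_{\textsc{m}-k}$ ($0\le k\le\textsc{m}-1$), all other entries $0$; its eigenvalues are real and simple, denoted $\textsc{e}_0>\textsc{e}_1>\cdots>\textsc{e}_{\textsc{m}}$. The monic elliptic Racah polynomials are $p_0(\textsc{e})=1$ and, for $1\le k\le\textsc{m}+1$, $p_k(\textsc{e})$ = the determinant of the upper-left $k\times k$ submatrix of $\textsc{e}\mathbf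 I_{\textsc{m}+1}-\mathbf H$; $f_k(\textsc{e})=p_k(\textsc{e})\prod_{0\le j<k}\tilde a_{\textsc{m}-j}^{-1}$. The elliptic Racah matrix $\mathbf F$ is the $(\textsc{m}+1)\times(\textsc{m}+1)$ matrix whose $j$-th column ($j=0,\dots,\textsc{m}$) is $(f_0(\textsc{e}_j),\dots,f_{\textsc{m}}(\textsc{e}_j))^T$, i.e. $F_{k,j}=f_k(\textsc{e}_j)$. Weights: $\Delta_k=\prod_{1\le l\le k}\tilde a_{\textsc{m}+1-l}/a_l$. Norms: $N_j=\frac{1}{|\epsilon_j|\,a_1\cdots a_{\textsc{m}}}\prod_{0\le l\le\textsc{m},\,l\ne j}|\textsc{e}_j-\textsc{e}_l|$ with $\epsilon_j=\tilde p_{\textsc{m}}(\textsc{e}_j)/(a_1\cdots a_{\textsc{m}})$, where $\tilde p_{\textsc{m}}$ denotes $p_{\textsc{m}}$ computed with parameters interchanged as $(u_1,v_1)\leftrightarrow(u_2,v_2)$, $(u_3,v_3)\leftrightarrow(u_4,v_4)$. *)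

theory Defs
  imports "HOL-Analysis.Infinite_Products" "Jordan_Normal_Form.Char_Poly"
begin

definition theta1 :: "real \<Rightarrow> real \<Rightarrow> real" where
  "theta1 p z = 2 * p powr (1/4) * sin z *
     (\<Prod>n. (1 - p ^ (2 * Suc n)) * (1 - 2 * p ^ (2 * Suc n) * cos (2 * z) + p ^ (4 * Suc n)))"

definition theta2 :: "real \<Rightarrow> real \<Rightarrow> real" where
  "theta2 p z = 2 * p powr (1/4) * cos z *
     (\<Prod>n. (1 - p ^ (2 * Suc n)) * (1 + 2 * p ^ (2 * Suc n) * cos (2 * z) + p ^ (4 * Suc n)))"

definition theta3 :: "real \<Rightarrow> real \<Rightarrow> real" where
  "theta3 p z =
     (\<Prod>n. (1 - p ^ (2 * Suc n)) * (1 + 2 * p ^ (2 * Suc n - 1) * cos (2 * z) + p ^ (4 * Suc n - 2)))"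

definition theta4 :: "real \<Rightarrow> real \<Rightarrow> real" where
  "theta4 p z =
     (\<Prod>n. (1 - p ^ (2 * Suc n)) * (1 - 2 * p ^ (2 * Suc n - 1) * cos (2 * z) + p ^ (4 * Suc n - 2)))"

definition brk :: "real \<Rightarrow> real \<Rightarrow> nat \<Rightarrow> real \<Rightarrow> real" where
  "brk p \<alpha> r z =
     (if r = 1 then theta1 p (\<alpha> / 2 * z) / (\<alpha> / 2 * deriv (theta1 p) 0)
      else if r = 2 then theta2 p (\<alpha> / 2 * z) / theta2 p 0
      else if r = 3 then theta3 p (\<alpha> / 2 * z) / theta3 p 0
      else theta4 p (\<alpha> / 2 * z) / theta4 p 0)"

definition perm4 :: "nat \<Rightarrow> nat \<Rightarrow> nat" where
  "perm4 r s =
     (if r = 2 then (if s = 1 then 2 else if s = 2 then 1 else if s = 3 then 4 else if s = 4 then 3 else s)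
      else if r = 3 then (if s = 1 then 3 else if s = 3 then 1 else if s = 2 then 4 else if s = 4 then 2 else s)
      else if r = 4 then (if s = 1 then 4 else if s = 4 then 1 else if s = 2 then 3 else if s = 3 then 2 else s)
      else s)"

text \<open>Parameters: nome p, us = (u_1..u_4), vs = (v_1..v_4) (indexed by 1..4), M, spectral parameter u.\<close>

definition alph :: "(nat \<Rightarrow> real) \<Rightarrow> nat \<Rightarrow> real" where
  "alph us M = pi / (us 1 + us 2 + real M)"

definition cr :: "real \<Rightarrow> (nat \<Rightarrow> real) \<Rightarrow> (nat \<Rightarrow> real) \<Rightarrow> nat \<Rightarrow> real \<Rightarrow> nat \<Rightarrow> real" where
  "cr p us vs M u r =
     (let b = brk p (alph us M) in
      2 / (b 1 u * b 1 (u + 1)) *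
      (\<Prod>s\<in>{1..4}. b s (us (perm4 r s) - 1/2) * b s (vs (perm4 r s))))"

definition acoef :: "real \<Rightarrow> (nat \<Rightarrow> real) \<Rightarrow> (nat \<Rightarrow> real) \<Rightarrow> nat \<Rightarrow> nat \<Rightarrow> real" where
  "acoef p us vs M k =
     (let b = brk p (alph us M) in
      \<Prod>r\<in>{1..4}. b r (us 1 - us r + real k) * b r (us 1 - vs r - 1/2 + real k) /
                   (b r (us 1 + real k) * b r (us 1 - 1/2 + real k)))"

definition atcoef :: "real \<Rightarrow> (nat \<Rightarrow> real) \<Rightarrow> (nat \<Rightarrow> real) \<Rightarrow> nat \<Rightarrow> nat \<Rightarrow> real" where
  "atcoef p us vs M k =
     (let b = brk p (alph us M) in
      \<Prod>r\<in>{1..4}. b r (us 2 - us (perm4 2 r) + real k) * b r (us 2 - vs (perm4 2 r) - 1/2 + real k) /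
                   (b r (us 2 + real k) * b r (us 2 - 1/2 + real k)))"

definition bcoef :: "real \<Rightarrow> (nat \<Rightarrow> real) \<Rightarrow> (nat \<Rightarrow> real) \<Rightarrow> nat \<Rightarrow> real \<Rightarrow> nat \<Rightarrow> real" where
  "bcoef p us vs M u k =
     (let b = brk p (alph us M) in
      \<Sum>r\<in>{1..4}. cr p us vs M u r *
         (b r (us 1 + real k + 1/2 + u) * b r (us 1 + real k - 1/2 - u)) /
         (b r (us 1 + real k + 1/2) * b r (us 1 + real k - 1/2)))"

definition Hent :: "real \<Rightarrow> (nat \<Rightarrow> real) \<Rightarrow> (nat \<Rightarrow> real) \<Rightarrow> nat \<Rightarrow> real \<Rightarrow> nat \<Rightarrow> nat \<Rightarrow> real" where
  "Hent p us vs M u i j =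
     (if i = j then bcoef p us vs M u i
      else if i = j + 1 then acoef p us vs M i
      else if j = i + 1 then atcoef p us vs M (M - i)
      else 0)"

definition Hmat :: "real \<Rightarrow> (nat \<Rightarrow> real) \<Rightarrow> (nat \<Rightarrow> real) \<Rightarrow> nat \<Rightarrow> real \<Rightarrow> real mat" where
  "Hmat p us vs M u = mat (M + 1) (M + 1) (\<lambda>(i, j). Hent p us vs M u i j)"

definition ppoly :: "real \<Rightarrow> (nat \<Rightarrow> real) \<Rightarrow> (nat \<Rightarrow> real) \<Rightarrow> nat \<Rightarrow> real \<Rightarrow> nat \<Rightarrow> real \<Rightarrow> real" where
  "ppoly p us vs M u k E =
     det (mat k k (\<lambda>(i, j). (if i = j then E else 0) - Hent p us vs M u i j))"

definition fpoly :: "real \<Rightarrow> (nat \<Rightarrow> real) \<Rightarrow> (nat \<Rightarrow> real) \<Rightarrow> nat \<Rightarrow> real \<Rightarrow> nat \<Rightarrow> real \<Rightarrow> real" where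
  "fpoly p us vs M u k E =
     ppoly p us vs M u k E * (\<Prod>j<k. inverse (atcoef p us vs M (M - j)))"

text \<open>The elliptic Racah matrix, for a given labelling E_0..E_M of the eigenvalues of H.\<close>

definition Fmat :: "real \<Rightarrow> (nat \<Rightarrow> real) \<Rightarrow> (nat \<Rightarrow> real) \<Rightarrow> nat \<Rightarrow> real \<Rightarrow> (nat \<Rightarrow> real) \<Rightarrow> real mat" where
  "Fmat p us vs M u E = mat (M + 1) (M + 1) (\<lambda>(k, j). fpoly p us vs M u k (E j))"

definition Delta :: "real \<Rightarrow> (nat \<Rightarrow> real) \<Rightarrow> (nat \<Rightarrow> real) \<Rightarrow> nat \<Rightarrow> nat \<Rightarrow> real" where
  "Delta p us vs M k = (\<Prod>l\<in>{1..k}. atcoef p us vs M (M + 1 - l) / acoef p us vs M l)"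

text \<open>Interchange (u_1,v_1) with (u_2,v_2) and (u_3,v_3) with (u_4,v_4): precomposition with pi_2.\<close>

definition epsn :: "real \<Rightarrow> (nat \<Rightarrow> real) \<Rightarrow> (nat \<Rightarrow> real) \<Rightarrow> nat \<Rightarrow> real \<Rightarrow> (nat \<Rightarrow> real) \<Rightarrow> nat \<Rightarrow> real" where
  "epsn p us vs M u E j =
     ppoly p (us \<circ> perm4 2) (vs \<circ> perm4 2) M u M (E j) / (\<Prod>l\<in>{1..M}. acoef p us vs M l)"

definition Nrm :: "real \<Rightarrow> (nat \<Rightarrow> real) \<Rightarrow> (nat \<Rightarrow> real) \<Rightarrow> nat \<Rightarrow> real \<Rightarrow> (nat \<Rightarrow> real) \<Rightarrow> nat \<Rightarrow> real" where
  "Nrm p us vs M u E j =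
     1 / (\<bar>epsn p us vs M u E j\<bar> * (\<Prod>l\<in>{1..M}. acoef p us vs M l)) *
     (\<Prod>l\<in>{0..M} - {j}. \<bar>E j - E l\<bar>)"

definition diagm :: "nat \<Rightarrow> (nat \<Rightarrow> real) \<Rightarrow> real mat" where
  "diagm n d = mat n n (\<lambda>(i, j). if i = j then d i else 0)"

end

theory Submission
  imports Defs
begin

text \<open>\<open>H\<close> is a Jacobi matrix: it is tridiagonal, and its off-diagonal entries \<open>a\<^sub>k\<close>,
  \<open>\<tilde>a\<^sub>k\<close> are positive because every theta quotient in them is evaluated where the theta
  function is positive.  For such a matrix the Christoffel--Darboux identity shows that the
  vectors \<open>(f\<^sub>k(E\<^sub>j))\<^sub>k\<close> are orthogonal for the weights \<open>\<Delta>\<^sub>k\<close>; the diagonal value is the confluent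
  limit, which involves \<open>p\<^sub>M\<close> of the reversed matrix, because an eigenvector normalised at
  the top and one normalised at the bottom differ by the factor \<open>f\<^sub>M(E\<^sub>j)\<close>.  The theta
  reflection \<open>\<theta>\<^sub>r(\<pi>/2 - z) = \<theta>\<^bsub>\<pi>\<^sub>2(r)\<^esub>(z)\<close> together with \<open>\<alpha>(u\<^sub>1 + u\<^sub>2 + M) = \<pi>\<close> shows that the
  reversed matrix is \<open>H\<close> with the parameters interchanged, which identifies these values with
  \<open>N\<^sub>j\<close>.  Orthogonality is \<open>N\<^sup>-\<^sup>1 F\<^sup>T \<Delta> F = I\<close>, so \<open>det F\<^sup>2 = \<Prod> N\<^sub>l / \<Delta>\<^sub>l\<close>; the sign of \<open>det F\<close> is
  that of a Vandermonde determinant in the decreasing nodes \<open>E\<^sub>j\<close>.\<close>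

section \<open>Leading minors of tridiagonal matrices\<close>

definition char_minor :: "(nat \<Rightarrow> nat \<Rightarrow> real) \<Rightarrow> nat \<Rightarrow> real poly" where
  "char_minor T k = char_poly (mat k k (\<lambda>(i, j). T i j))"

lemma poly_char_minor:
  "poly (char_minor T k) E = det (mat k k (\<lambda>(i, j). (if i = j then E else 0) - T i j))"
proof -
  have "- char_matrix (mat k k (\<lambda>(i, j). T i j)) E
      = mat k k (\<lambda>(i, j). (if i = j then E else 0) - T i j)"
    by (rule eq_matI) (auto simp: char_matrix_def)
  then show ?thesis
    unfolding char_minor_def by (simp add: char_poly_matrix[of _ k])
qed

lemma char_minor_monic: "degree (char_minor T k) = k \<and> coeff (char_minor T k) k = 1"
  unfolding char_minor_def by (rule degree_monic_char_poly) simp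

lemma char_minor_cong:
  assumes "\<And>i j. i < k \<Longrightarrow> j < k \<Longrightarrow> T i j = T' i j"
  shows "char_minor T k = char_minor T' k"
  unfolding char_minor_def using assms by (intro arg_cong[where f = char_poly] eq_matI) auto

lemma char_minor_0 [simp]: "char_minor T 0 = 1"
  unfolding char_minor_def char_poly_def by (simp add: det_dim_zero)

lemma poly_char_minor_1: "poly (char_minor T 1) E = E - T 0 0"
proof -
  define A where "A = mat 1 1 (\<lambda>(i, j). (if i = j then E else 0) - T i j)"
  have A: "A \<in> carrier_mat 1 1" by (simp add: A_def)
  have "cofactor A 0 0 = 1"
    unfolding cofactor_def using det_dim_zero[OF mat_delete_carrier[OF A, simplified]] by simp
  then have "det A = A $$ (0, 0)"
    using laplace_expansion_row[OF A, of 0] by simp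
  then show ?thesis by (simp add: poly_char_minor A_def)
qed

text \<open>Laplace expansion along the last row, then along the last column of the
  remaining off-diagonal cofactor.\<close>

lemma poly_char_minor_Suc_Suc:
  assumes tri: "\<And>i j. j \<le> Suc k \<Longrightarrow> Suc i < j \<Longrightarrow> T i j = 0 \<and> T j i = 0"
  shows "poly (char_minor T (Suc (Suc k))) E
      = (E - T (Suc k) (Suc k)) * poly (char_minor T (Suc k)) E
        - T (Suc k) k * T k (Suc k) * poly (char_minor T k) E"
proof -
  define f where "f = (\<lambda>(i, j). (if i = j then E else 0) - T i j)"
  define n where "n = Suc k"
  define A where "A = mat (Suc n) (Suc n) f"
  define B where "B = mat_delete A n k"
  have A: "A \<in> carrier_mat (Suc n) (Suc n)" by (simp add: A_def)
  have B: "B \<in> carrier_mat n n" by (simp add: B_def A_def mat_delete_def)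
  have B_entry: "B $$ (i, j) = f (i, if j < k then j else Suc j)" if "i < n" "j < n" for i j
    using that by (simp add: B_def A_def mat_delete_def n_def)
  have del_B: "mat_delete B k k = mat k k f"
    by (rule eq_matI) (auto simp: B_def A_def mat_delete_def n_def)
  have del_A: "mat_delete A n n = mat n n f"
    by (rule eq_matI) (auto simp: A_def mat_delete_def)
  have "det B = (\<Sum>i<n. B $$ (i, k) * cofactor B i k)"
    using laplace_expansion_column[OF B, of k] by (simp add: n_def)
  also have "\<dots> = B $$ (k, k) * cofactor B k k"
    by (simp add: n_def B_entry f_def tri sum.neutral)
  finally have det_B: "det B = - T k n * det (mat k k f)"
    by (simp add: n_def B_entry f_def cofactor_def del_B)
  have cof_A: "cofactor A n k = - det B" "cofactor A n n = det (mat n n f)"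
    unfolding cofactor_def B_def[symmetric] del_A by (simp_all add: n_def)
  have "det A = (\<Sum>j<Suc n. A $$ (n, j) * cofactor A n j)"
    using laplace_expansion_row[OF A, of n] by simp
  also have "\<dots> = A $$ (n, k) * cofactor A n k + A $$ (n, n) * cofactor A n n"
    by (simp add: n_def A_def f_def tri sum.neutral)
  also have "\<dots> = T n k * det B + (E - T n n) * det (mat n n f)"
  proof -
    have "A $$ (n, k) = - T n k" "A $$ (n, n) = E - T n n"
      by (simp_all add: A_def f_def n_def)
    then show ?thesis by (simp add: cof_A)
  qed
  finally have "det A = T n k * det B + (E - T n n) * det (mat n n f)" .
  then show ?thesis
    by (simp add: poly_char_minor A_def f_def n_def det_B algebra_simps)
qed

lemma poly_eq_smult_prod_roots:
  fixes R :: "'a :: idom poly"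
  assumes "degree R \<le> n" and "inj_on x {..<n}" and "\<And>j. j < n \<Longrightarrow> poly R (x j) = 0"
  shows "R = Polynomial.smult (coeff R n) (\<Prod>j<n. [:- x j, 1:])"
proof (rule poly_eqI_degree_lead_coeff[where A = "x ` {..<n}"])
  let ?P = "\<Prod>j<n. [:- x j, 1:]"
  have deg: "degree ?P = n"
    by (simp add: degree_prod_eq_sum_degree)
  have "coeff ?P n = lead_coeff ?P"
    by (simp add: deg)
  also have "\<dots> = 1"
    by (simp add: lead_coeff_prod)
  finally show "coeff R n = coeff (Polynomial.smult (coeff R n) (\<Prod>j<n. [:- x j, 1:])) n"
    and "degree (Polynomial.smult (coeff R n) (\<Prod>j<n. [:- x j, 1:])) \<le> n"
    using deg by (simp_all add: degree_smult_le)
qed (use assms in \<open>auto simp: card_image poly_prod\<close>)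

text \<open>The determinant is a polynomial of degree at most \<open>n\<close> in the last node; it
  vanishes at the other nodes, and its leading coefficient is the determinant of size \<open>n\<close>.\<close>

lemma det_poly_vandermonde:
  fixes Q :: "nat \<Rightarrow> 'a :: idom poly" and x :: "nat \<Rightarrow> 'a"
  assumes deg_Q: "\<And>k. degree (Q k) \<le> k" and "inj_on x {..<n}"
  shows "det (mat n n (\<lambda>(k, j). poly (Q k) (x j)))
      = (\<Prod>k<n. coeff (Q k) k) * (\<Prod>l<n. \<Prod>j<l. x l - x j)"
  using \<open>inj_on x {..<n}\<close>
proof (induction n)
  case 0
  then show ?case by (simp add: det_dim_zero)
next
  case (Suc n)
  define A where "A y = mat (Suc n) (Suc n) (\<lambda>(k, j). poly (Q k) (if j = n then y else x j))" for y
  have A: "A y \<in> carrier_mat (Suc n) (Suc n)" for y by (simp add: A_def)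
  define c where "c i = cofactor (A 0) i n" for i
  have cofactor_A: "cofactor (A y) i n = c i" for y i
  proof -
    have "mat_delete (A y) i n = mat_delete (A 0) i n"
      by (rule eq_matI) (auto simp: A_def mat_delete_def)
    then show ?thesis by (simp add: c_def cofactor_def)
  qed
  define R where "R = (\<Sum>i<Suc n. Polynomial.smult (c i) (Q i))"
  have det_A: "det (A y) = poly R y" for y
  proof -
    have "det (A y) = (\<Sum>i<Suc n. A y $$ (i, n) * cofactor (A y) i n)"
      using laplace_expansion_column[OF A, of n] by simp
    then show ?thesis
      unfolding cofactor_A by (simp add: R_def poly_sum A_def mult_ac)
  qed
  have deg_R: "degree R \<le> n"
    unfolding R_def by (intro degree_sum_le) (auto intro: order_trans[OF degree_smult_le] order_trans[OF deg_Q])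
  have "coeff R n = (\<Sum>i<Suc n. c i * coeff (Q i) n)"
    by (simp add: R_def coeff_sum)
  also have "\<dots> = c n * coeff (Q n) n"
    by (simp add: coeff_eq_0 order.strict_trans1[OF deg_Q])
  also have "c n = det (mat n n (\<lambda>(k, j). poly (Q k) (x j)))"
  proof -
    have "mat_delete (A 0) n n = mat n n (\<lambda>(k, j). poly (Q k) (x j))"
      by (rule eq_matI) (auto simp: A_def mat_delete_def)
    then show ?thesis by (simp add: c_def cofactor_def)
  qed
  finally have coeff_R: "coeff R n = (\<Prod>k<Suc n. coeff (Q k) k) * (\<Prod>l<n. \<Prod>j<l. x l - x j)"
    using Suc by (simp add: inj_on_def mult_ac)
  have "poly R (x j) = 0" if "j < n" for j
  proof -
    have "det (A (x j)) = 0"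
      by (rule det_identical_columns[OF A, of j n]) (use that in \<open>auto simp: A_def\<close>)
    then show ?thesis by (simp add: det_A)
  qed
  then have "R = Polynomial.smult (coeff R n) (\<Prod>j<n. [:- x j, 1:])"
    using Suc.prems by (intro poly_eq_smult_prod_roots deg_R) (auto simp: inj_on_def)
  moreover have "A (x n) = mat (Suc n) (Suc n) (\<lambda>(k, j). poly (Q k) (x j))"
    by (rule eq_matI) (auto simp: A_def)
  ultimately show ?case
    using det_A[of "x n"] by (simp add: coeff_R poly_prod mult_ac)
qed

lemma prod_vandermonde_reverse:
  fixes x :: "nat \<Rightarrow> 'a :: comm_ring_1"
  shows "(\<Prod>l<Suc M. \<Prod>j<l. x l - x j) = (-1) ^ (M * Suc M div 2) * (\<Prod>l<Suc M. \<Prod>j<l. x j - x l)"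
proof -
  have "(\<Prod>l<Suc M. \<Prod>j<l. x l - x j) = (\<Prod>l<Suc M. (-1) ^ l * (\<Prod>j<l. x j - x l))"
  proof (intro prod.cong refl)
    show "(\<Prod>j<l. x l - x j) = (-1) ^ l * (\<Prod>j<l. x j - x l)" for l
      using prod_uminus[of "\<lambda>j. x j - x l" "{..<l}"] by simp
  qed
  also have "\<dots> = (\<Prod>l<Suc M. (-1) ^ l) * (\<Prod>l<Suc M. \<Prod>j<l. x j - x l)"
    by (rule prod.distrib)
  also have "(\<Prod>l<Suc M. (-1 :: 'a) ^ l) = (-1) ^ (\<Sum>l<Suc M. l)"
    by (rule power_sum[symmetric])
  also have "(\<Sum>l<Suc M. l) = M * Suc M div 2"
    using gauss_sum_nat[of M] by (simp add: atLeast0AtMost lessThan_Suc_atMost)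
  finally show ?thesis .
qed

section \<open>Jacobi matrices and orthogonality\<close>

text \<open>For \<open>T = H\<close>, \<open>jacobi_poly T k\<close> and \<open>jacobi_weight T k\<close> are \<open>f\<^sub>k\<close> and \<open>\<Delta>\<^sub>k\<close>;
  \<open>jacobi_residual T M\<close> is a multiple of \<open>p\<^bsub>M+1\<^esub>\<close> and so vanishes at the eigenvalues.\<close>

definition jacobi_poly :: "(nat \<Rightarrow> nat \<Rightarrow> real) \<Rightarrow> nat \<Rightarrow> real poly" where
  "jacobi_poly T k = Polynomial.smult (\<Prod>j<k. inverse (T j (Suc j))) (char_minor T k)"

definition jacobi_residual :: "(nat \<Rightarrow> nat \<Rightarrow> real) \<Rightarrow> nat \<Rightarrow> real poly" where
  "jacobi_residual T k = Polynomial.smult (\<Prod>j<k. inverse (T j (Suc j))) (char_minor T (Suc k))"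

definition jacobi_weight :: "(nat \<Rightarrow> nat \<Rightarrow> real) \<Rightarrow> nat \<Rightarrow> real" where
  "jacobi_weight T k = (\<Prod>l\<in>{1..k}. T (l - 1) l / T l (l - 1))"

definition jacobi_row :: "(nat \<Rightarrow> nat \<Rightarrow> real) \<Rightarrow> nat \<Rightarrow> real \<Rightarrow> (nat \<Rightarrow> real) \<Rightarrow> nat \<Rightarrow> bool" where
  "jacobi_row T M E z i \<longleftrightarrow>
     (if 0 < i then T i (i - 1) * z (i - 1) else 0) + T i i * z i
       + (if i < M then T i (Suc i) * z (Suc i) else 0) = E * z i"

lemma jacobi_poly_0 [simp]: "jacobi_poly T 0 = 1"
  by (simp add: jacobi_poly_def)

lemma jacobi_poly_degree: "degree (jacobi_poly T k) \<le> k"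
  unfolding jacobi_poly_def using char_minor_monic[of T k] degree_smult_le order_trans by metis

lemma jacobi_poly_coeff: "coeff (jacobi_poly T k) k = (\<Prod>j<k. inverse (T j (Suc j)))"
  using char_minor_monic[of T k] by (simp add: jacobi_poly_def)

lemma jacobi_weight_0 [simp]: "jacobi_weight T 0 = 1"
  by (simp add: jacobi_weight_def)

lemma jacobi_weight_Suc: "jacobi_weight T (Suc k) = jacobi_weight T k * (T k (Suc k) / T (Suc k) k)"
  by (simp add: jacobi_weight_def prod.cl_ivl_Suc)

lemma jacobi_row_reverse:
  assumes "i \<le> M"
  shows "jacobi_row (\<lambda>i j. T (M - i) (M - j)) M E z (M - i) \<longleftrightarrow> jacobi_row T M E (\<lambda>k. z (M - k)) i"
proof -
  have "Suc (M - i) = M - (i - 1)" if "0 < i" using that assms by simp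
  moreover have "M - i - 1 = M - Suc i" by simp
  ultimately show ?thesis
    using assms by (cases "i = 0"; cases "i = M") (auto simp: jacobi_row_def algebra_simps)
qed

locale jacobi_matrix =
  fixes T :: "nat \<Rightarrow> nat \<Rightarrow> real" and M :: nat
  assumes tridiagonal: "\<And>i j. j \<le> M \<Longrightarrow> Suc i < j \<Longrightarrow> T i j = 0 \<and> T j i = 0"
    and subdiagonal_pos: "\<And>k. k < M \<Longrightarrow> T (Suc k) k > 0"
    and superdiagonal_pos: "\<And>k. k < M \<Longrightarrow> T k (Suc k) > 0"
begin

lemma jacobi_residual_eq:
  assumes "k < M"
  shows "jacobi_residual T k = Polynomial.smult (T k (Suc k)) (jacobi_poly T (Suc k))"
proof -
  have "T k (Suc k) * ((\<Prod>j<k. inverse (T j (Suc j))) * inverse (T k (Suc k)))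
      = (\<Prod>j<k. inverse (T j (Suc j)))"
    using superdiagonal_pos[OF assms] by (simp add: field_simps)
  then show ?thesis
    unfolding jacobi_residual_def jacobi_poly_def prod.lessThan_Suc smult_smult by (simp only:)
qed

lemma poly_jacobi_residual:
  assumes "k \<le> M"
  shows "poly (jacobi_residual T k) E = (E - T k k) * poly (jacobi_poly T k) E
      - (if k = 0 then 0 else T k (k - 1) * poly (jacobi_poly T (k - 1)) E)"
proof (cases k)
  case 0
  then show ?thesis
    using poly_char_minor_1[of T E] by (simp add: jacobi_residual_def)
next
  case (Suc m)
  have nz: "T m (Suc m) \<noteq> 0" using superdiagonal_pos[of m] assms Suc by simp
  have rec: "poly (char_minor T (Suc (Suc m))) E
      = (E - T (Suc m) (Suc m)) * poly (char_minor T (Suc m)) E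
        - T (Suc m) m * T m (Suc m) * poly (char_minor T m) E"
    by (rule poly_char_minor_Suc_Suc) (use tridiagonal Suc assms in auto)
  show ?thesis
    unfolding Suc jacobi_residual_def jacobi_poly_def poly_smult rec
    using nz by (simp add: field_simps)
qed

lemma jacobi_weight_pos: "k \<le> M \<Longrightarrow> jacobi_weight T k > 0"
  by (induction k) (simp_all add: jacobi_weight_Suc subdiagonal_pos superdiagonal_pos)

theorem christoffel_darboux:
  assumes "K \<le> M"
  shows "(x - y) * (\<Sum>k\<le>K. jacobi_weight T k * poly (jacobi_poly T k) x * poly (jacobi_poly T k) y)
      = jacobi_weight T K * (poly (jacobi_residual T K) x * poly (jacobi_poly T K) y
                             - poly (jacobi_poly T K) x * poly (jacobi_residual T K) y)"
  using assms
proof (induction K)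
  case 0
  then show ?case by (simp add: poly_jacobi_residual algebra_simps)
next
  case (Suc K)
  then have K: "K < M" by simp
  let ?f = "\<lambda>k z. poly (jacobi_poly T k) z" and ?w = "jacobi_weight T"
  have "(x - y) * (\<Sum>k\<le>Suc K. ?w k * ?f k x * ?f k y)
      = ?w K * (poly (jacobi_residual T K) x * ?f K y - ?f K x * poly (jacobi_residual T K) y)
        + (x - y) * ?w (Suc K) * ?f (Suc K) x * ?f (Suc K) y"
    using Suc K by (simp add: algebra_simps)
  also have "\<dots> = ?w K * T K (Suc K) * (?f (Suc K) x * ?f K y - ?f K x * ?f (Suc K) y)
        + (x - y) * ?w (Suc K) * ?f (Suc K) x * ?f (Suc K) y"
    using K by (simp add: jacobi_residual_eq algebra_simps)
  also have "\<dots> = ?w (Suc K) * (poly (jacobi_residual T (Suc K)) x * ?f (Suc K) y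
                                  - ?f (Suc K) x * poly (jacobi_residual T (Suc K)) y)"
    using subdiagonal_pos[OF K] Suc.prems
    by (simp add: poly_jacobi_residual jacobi_weight_Suc field_simps)
  finally show ?case .
qed

lemma jacobi_row_jacobi_poly: "i < M \<Longrightarrow> jacobi_row T M E (\<lambda>k. poly (jacobi_poly T k) E) i"
  using poly_jacobi_residual[of i E] jacobi_residual_eq[of i]
  by (auto simp: jacobi_row_def algebra_simps)

lemma jacobi_row_last:
  "poly (char_minor T (Suc M)) E = 0 \<Longrightarrow> jacobi_row T M E (\<lambda>k. poly (jacobi_poly T k) E) M"
  using poly_jacobi_residual[of M E] by (auto simp: jacobi_row_def jacobi_residual_def algebra_simps)

text \<open>Solve the rows downwards from the last entry; the subdiagonal does not vanish.\<close>

lemma jacobi_rows_determine: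
  assumes v: "\<And>i. 0 < i \<Longrightarrow> i \<le> M \<Longrightarrow> jacobi_row T M E v i"
    and w: "\<And>i. 0 < i \<Longrightarrow> i \<le> M \<Longrightarrow> jacobi_row T M E w i"
    and "v M = c * w M" and "i \<le> M"
  shows "v i = c * w i"
proof -
  have "v i = c * w i \<and> (i < M \<longrightarrow> v (Suc i) = c * w (Suc i))"
    using \<open>i \<le> M\<close>
  proof (induction rule: inc_induct)
    case base
    then show ?case using \<open>v M = c * w M\<close> by simp
  next
    case (step n)
    let ?rhs = "\<lambda>z. E * z (Suc n) - T (Suc n) (Suc n) * z (Suc n)
                   - (if Suc n < M then T (Suc n) (Suc (Suc n)) * z (Suc (Suc n)) else 0)"
    have row_v: "T (Suc n) n * v n = ?rhs v" and row_w: "T (Suc n) n * w n = ?rhs w"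
      using v[of "Suc n"] w[of "Suc n"] step.hyps by (simp_all add: jacobi_row_def algebra_simps)
    have "T (Suc n) n * v n = c * ?rhs w"
      unfolding row_v using step.IH by (simp add: algebra_simps)
    also have "\<dots> = T (Suc n) n * (c * w n)"
      unfolding row_w[symmetric] by (rule mult.left_commute)
    finally have "T (Suc n) n * v n = T (Suc n) n * (c * w n)" .
    moreover have "T (Suc n) n \<noteq> 0"
      using subdiagonal_pos[of n] step.hyps by simp
    ultimately have "v n = c * w n"
      by simp
    then show ?case using step.IH by simp
  qed
  then show ?thesis ..
qed

end

lemma real_sqrt_prod: "sqrt (\<Prod>x\<in>A. f x) = (\<Prod>x\<in>A. sqrt (f x))"
  by (induction A rule: infinite_finite_induct) (simp_all add: real_sqrt_mult)

lemma diagm_eq_mat_diag: "diagm n d = mat_diag n d"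
  by (rule eq_matI) (auto simp: diagm_def mat_diag_def)

lemma diagm_carrier [simp]: "diagm n d \<in> carrier_mat n n"
  by (simp add: diagm_def)

lemma det_diagm: "det (diagm n d) = (\<Prod>i<n. d i)"
proof -
  have "det (diagm n d) = prod_list (diag_mat (diagm n d))"
    by (rule det_upper_triangular[of _ n]) (auto simp: diagm_def upper_triangular_def)
  also have "\<dots> = (\<Prod>i<n. d i)"
    by (simp add: diag_mat_def diagm_def prod.list_conv_set_nth atLeast0LessThan)
  finally show ?thesis .
qed

locale jacobi_spectrum = jacobi_matrix +
  fixes E :: "nat \<Rightarrow> real"
  assumes eigenvalues_decreasing: "\<And>i j. i < j \<Longrightarrow> j \<le> M \<Longrightarrow> E j < E i"
    and char_minor_eigenvalue: "\<And>j. j \<le> M \<Longrightarrow> poly (char_minor T (Suc M)) (E j) = 0"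
begin

definition T_rev :: "nat \<Rightarrow> nat \<Rightarrow> real" where
  "T_rev i j = T (M - i) (M - j)"

lemma jacobi_matrix_reversed: "jacobi_matrix T_rev M"
proof
  show "T_rev i j = 0 \<and> T_rev j i = 0" if "j \<le> M" "Suc i < j" for i j
    using tridiagonal[of "M - i" "M - j"] that by (simp add: T_rev_def)
  show "T_rev (Suc k) k > 0" "T_rev k (Suc k) > 0" if "k < M" for k
    using subdiagonal_pos[of "M - Suc k"] superdiagonal_pos[of "M - Suc k"] that
    by (simp_all add: T_rev_def Suc_diff_Suc)
qed

lemma eigenvalues_inj: "inj_on E {..<Suc M}"
proof (rule inj_onI)
  show "i = j" if "i \<in> {..<Suc M}" "j \<in> {..<Suc M}" "E i = E j" for i j
    using that eigenvalues_decreasing[of i j] eigenvalues_decreasing[of j i]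
    by (cases i j rule: linorder_cases) auto
qed

lemma char_minor_eq_prod: "char_minor T (Suc M) = (\<Prod>l<Suc M. [:- E l, 1:])"
proof -
  have "char_minor T (Suc M)
      = Polynomial.smult (coeff (char_minor T (Suc M)) (Suc M)) (\<Prod>l<Suc M. [:- E l, 1:])"
    by (rule poly_eq_smult_prod_roots)
      (use char_minor_monic eigenvalues_inj char_minor_eigenvalue in auto)
  then show ?thesis
    using char_minor_monic[of T "Suc M"] by simp
qed

text \<open>Both vectors solve the eigenvalue equation in the rows \<open>1, \<dots>, M\<close>; the first is
  normalized at the top and the second, which comes from the reversed matrix, at the bottom.\<close>

lemma jacobi_poly_times_reversed:
  assumes "j \<le> M"
  shows "poly (jacobi_poly T M) (E j) * poly (jacobi_poly T_rev M) (E j) = 1"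
proof -
  let ?v = "\<lambda>k. poly (jacobi_poly T k) (E j)"
  let ?w = "\<lambda>k. poly (jacobi_poly T_rev (M - k)) (E j)"
  have T_rev_eq: "T_rev = (\<lambda>i j. T (M - i) (M - j))"
    by (simp add: fun_eq_iff T_rev_def)
  have rows_v: "jacobi_row T M (E j) ?v i" if "i \<le> M" for i
  proof (cases "i < M")
    case True
    then show ?thesis by (rule jacobi_row_jacobi_poly)
  next
    case False
    then show ?thesis
      using jacobi_row_last[OF char_minor_eigenvalue[OF assms]] that by simp
  qed
  have rows_w: "jacobi_row T M (E j) ?w i" if "0 < i" "i \<le> M" for i
  proof -
    have "jacobi_row T_rev M (E j) (\<lambda>k. poly (jacobi_poly T_rev k) (E j)) (M - i)"
      by (rule jacobi_matrix.jacobi_row_jacobi_poly[OF jacobi_matrix_reversed]) (use that in simp)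
    then show ?thesis
      using jacobi_row_reverse[OF \<open>i \<le> M\<close>, of T, folded T_rev_eq] by simp
  qed
  have "?v 0 = ?v M * ?w 0"
    by (rule jacobi_rows_determine[where E = "E j" and v = ?v and w = ?w and c = "?v M"])
      (simp_all add: rows_v rows_w)
  then show ?thesis by simp
qed

text \<open>The norm \<open>N\<^sub>j\<close> of the paper; orthogonality identifies it with
  \<open>\<Sum>\<^sub>k \<Delta>\<^sub>k f\<^sub>k(E\<^sub>j)\<^sup>2\<close>.\<close>

definition jacobi_norm :: "nat \<Rightarrow> real" where
  "jacobi_norm j = 1 / (\<bar>poly (jacobi_poly T_rev M) (E j)\<bar> * (\<Prod>l\<in>{1..M}. T l (l - 1)))
                   * (\<Prod>l\<in>{0..M} - {j}. \<bar>E j - E l\<bar>)"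

lemma subdiagonal_prod_pos: "(\<Prod>l\<in>{1..M}. T l (l - 1)) > 0"
proof (rule prod_pos)
  show "T l (l - 1) > 0" if "l \<in> {1..M}" for l
    using subdiagonal_pos[of "l - 1"] that by auto
qed

lemma jacobi_norm_pos:
  assumes "j \<le> M"
  shows "jacobi_norm j > 0"
proof -
  have "poly (jacobi_poly T_rev M) (E j) \<noteq> 0"
    using jacobi_poly_times_reversed[OF assms] by auto
  moreover have "(\<Prod>l\<in>{0..M} - {j}. \<bar>E j - E l\<bar>) > 0"
  proof (rule prod_pos)
    show "\<bar>E j - E l\<bar> > 0" if "l \<in> {0..M} - {j}" for l
      using inj_onD[OF eigenvalues_inj, of j l] that assms by auto
  qed
  ultimately show ?thesis
    using subdiagonal_prod_pos by (simp add: jacobi_norm_def)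
qed

lemma jacobi_weight_times_scale:
  "jacobi_weight T M * (\<Prod>j<M. inverse (T j (Suc j))) = inverse (\<Prod>l\<in>{1..M}. T l (l - 1))"
proof -
  define P where "P = (\<Prod>j<M. T j (Suc j))"
  define Q where "Q = (\<Prod>l\<in>{1..M}. T l (l - 1))"
  have "jacobi_weight T M = P / Q"
    using prod.atLeast1_atMost_eq[of "\<lambda>l. T (l - 1) l" M]
    by (simp add: jacobi_weight_def prod_dividef P_def Q_def)
  moreover have "(\<Prod>j<M. inverse (T j (Suc j))) = inverse P"
    using prod_inversef[of "\<lambda>j. T j (Suc j)" "{..<M}"] by (simp add: comp_def P_def)
  moreover have "P > 0"
    unfolding P_def by (rule prod_pos) (simp add: superdiagonal_pos)
  ultimately show ?thesis
    using subdiagonal_prod_pos unfolding Q_def[symmetric] by (simp add: divide_inverse)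
qed

lemma poly_jacobi_residual_last:
  "poly (jacobi_residual T M) x = (\<Prod>j<M. inverse (T j (Suc j))) * (\<Prod>l<Suc M. x - E l)"
  unfolding jacobi_residual_def char_minor_eq_prod by (simp add: poly_prod del: prod.lessThan_Suc)

lemma christoffel_darboux_eigenvalue:
  assumes "j \<le> M"
  shows "(x - E j) * (\<Sum>k\<le>M. jacobi_weight T k * poly (jacobi_poly T k) x * poly (jacobi_poly T k) (E j))
      = jacobi_weight T M * poly (jacobi_residual T M) x * poly (jacobi_poly T M) (E j)"
  using christoffel_darboux[of M x "E j"] char_minor_eigenvalue[OF assms]
  by (simp add: jacobi_residual_def)

text \<open>The Christoffel--Darboux identity has a removable singularity at \<open>x = E j\<close>, whose
  value is read off from the factorization of the characteristic polynomial.\<close>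

lemma christoffel_darboux_confluent:
  assumes "j \<le> M"
  shows "(\<Sum>k\<le>M. jacobi_weight T k * poly (jacobi_poly T k) (E j) * poly (jacobi_poly T k) (E j))
      = (\<Prod>l\<in>{0..M} - {j}. E j - E l) / (poly (jacobi_poly T_rev M) (E j) * (\<Prod>l\<in>{1..M}. T l (l - 1)))"
proof -
  define S where "S x = (\<Sum>k\<le>M. jacobi_weight T k * poly (jacobi_poly T k) x * poly (jacobi_poly T k) (E j))" for x
  define R where "R x = inverse (\<Prod>l\<in>{1..M}. T l (l - 1)) * poly (jacobi_poly T M) (E j)
                        * (\<Prod>l\<in>{0..M} - {j}. x - E l)" for x
  have "(x - E j) * S x = (x - E j) * R x" for x
  proof -
    have split: "(\<Prod>l<Suc M. x - E l) = (x - E j) * (\<Prod>l\<in>{0..M} - {j}. x - E l)"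
      using prod.remove[of "{0..M}" j "\<lambda>l. x - E l"] assms
      by (simp add: atLeast0AtMost lessThan_Suc_atMost)
    have "(x - E j) * S x = jacobi_weight T M * (\<Prod>j<M. inverse (T j (Suc j)))
        * (\<Prod>l<Suc M. x - E l) * poly (jacobi_poly T M) (E j)"
      unfolding S_def christoffel_darboux_eigenvalue[OF assms] poly_jacobi_residual_last
      by (simp only: mult_ac)
    also have "\<dots> = (x - E j) * R x"
      unfolding jacobi_weight_times_scale split R_def by (simp only: mult_ac)
    finally show ?thesis .
  qed
  then have "S x = R x" if "x \<noteq> E j" for x
    using that by (metis mult_cancel_left right_minus_eq)
  moreover have "isCont S (E j)" "isCont R (E j)"
    unfolding S_def[abs_def] R_def[abs_def] by (intro continuous_intros)+
  ultimately have "S (E j) = R (E j)"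
    using LIM_unique LIM_equal[of "E j" S R] by (metis isCont_def)
  moreover have "poly (jacobi_poly T M) (E j) = inverse (poly (jacobi_poly T_rev M) (E j))"
    using jacobi_poly_times_reversed[OF assms] by (metis inverse_unique mult.commute)
  ultimately show ?thesis
    by (simp add: S_def R_def divide_inverse mult_ac)
qed

theorem jacobi_orthogonality:
  assumes "i \<le> M" and "j \<le> M"
  shows "(\<Sum>k\<le>M. jacobi_weight T k * poly (jacobi_poly T k) (E i) * poly (jacobi_poly T k) (E j))
      = (if i = j then jacobi_norm j else 0)"
proof (cases "i = j")
  case False
  then have "E i \<noteq> E j"
    using inj_onD[OF eigenvalues_inj, of i j] assms by auto
  then show ?thesis
    using christoffel_darboux_eigenvalue[OF \<open>j \<le> M\<close>, of "E i"] char_minor_eigenvalue[OF \<open>i \<le> M\<close>] False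
    by (simp add: jacobi_residual_def)
next
  case True
  let ?S = "\<Sum>k\<le>M. jacobi_weight T k * poly (jacobi_poly T k) (E j) * poly (jacobi_poly T k) (E j)"
  have "?S \<ge> jacobi_weight T 0 * poly (jacobi_poly T 0) (E j) * poly (jacobi_poly T 0) (E j)"
    by (rule member_le_sum) (auto intro!: mult_nonneg_nonneg simp: jacobi_weight_pos less_imp_le mult.assoc)
  then have "?S = \<bar>?S\<bar>"
    by simp
  also have "\<dots> = jacobi_norm j"
    unfolding christoffel_darboux_confluent[OF \<open>j \<le> M\<close>] jacobi_norm_def abs_divide abs_mult
    unfolding abs_of_pos[OF subdiagonal_prod_pos] by (simp add: abs_prod)
  finally show ?thesis
    using True by simp
qed

definition jacobi_F :: "real mat" where
  "jacobi_F = mat (M + 1) (M + 1) (\<lambda>(k, j). poly (jacobi_poly T k) (E j))"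

lemma jacobi_F_left_inverse:
  "diagm (M + 1) (\<lambda>l. inverse (jacobi_norm l)) * transpose_mat jacobi_F * diagm (M + 1) (jacobi_weight T)
     * jacobi_F = 1\<^sub>m (M + 1)"
    (is "?G * _ = _")
proof (rule eq_matI)
  have G: "?G = mat (M + 1) (M + 1)
      (\<lambda>(i, k). inverse (jacobi_norm i) * poly (jacobi_poly T k) (E i) * jacobi_weight T k)"
  proof -
    have "mat_diag (M + 1) (\<lambda>l. inverse (jacobi_norm l)) * transpose_mat jacobi_F
        = mat (M + 1) (M + 1) (\<lambda>(i, k). inverse (jacobi_norm i) * poly (jacobi_poly T k) (E i))"
      by (subst mat_diag_mult_left[of _ _ "M + 1"]) (auto simp: jacobi_F_def intro!: eq_matI)
    then show ?thesis
      unfolding diagm_eq_mat_diag by (subst mat_diag_mult_right[of _ "M + 1"]) (auto intro!: eq_matI)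
  qed
  fix i j assume "i < dim_row (1\<^sub>m (M + 1))" "j < dim_col (1\<^sub>m (M + 1))"
  then have i: "i \<le> M" and j: "j \<le> M" by auto
  have "(?G * jacobi_F) $$ (i, j) = inverse (jacobi_norm i)
      * (\<Sum>k\<le>M. jacobi_weight T k * poly (jacobi_poly T k) (E i) * poly (jacobi_poly T k) (E j))"
    using i j unfolding G
    by (simp add: jacobi_F_def scalar_prod_def sum_distrib_left atLeast0LessThan
        lessThan_Suc_atMost mult_ac)
  also have "\<dots> = 1\<^sub>m (M + 1) $$ (i, j)"
    using jacobi_orthogonality[OF i j] jacobi_norm_pos[OF j] i j by simp
  finally show "(?G * jacobi_F) $$ (i, j) = 1\<^sub>m (M + 1) $$ (i, j)" .
qed (simp_all add: jacobi_F_def diagm_def)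

lemma det_jacobi_F_squared:
  "det jacobi_F * det jacobi_F = (\<Prod>l\<in>{0..M}. jacobi_norm l / jacobi_weight T l)"
proof -
  define N where "N = (\<Prod>l<M + 1. jacobi_norm l)"
  define W where "W = (\<Prod>l<M + 1. jacobi_weight T l)"
  have "N > 0" "W > 0"
    unfolding N_def W_def by (intro prod_pos; simp add: jacobi_norm_pos jacobi_weight_pos)+
  have F: "jacobi_F \<in> carrier_mat (M + 1) (M + 1)"
    by (simp add: jacobi_F_def)
  have "1 = det (diagm (M + 1) (\<lambda>l. inverse (jacobi_norm l)) * transpose_mat jacobi_F
                 * diagm (M + 1) (jacobi_weight T) * jacobi_F)"
    unfolding jacobi_F_left_inverse by simp
  also have "\<dots> = inverse N * det jacobi_F * W * det jacobi_F"
    unfolding N_def W_def using F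
    by (simp add: det_mult[of _ "Suc M"] mult_carrier_mat[where n = "Suc M"] det_transpose
        det_diagm prod_inversef[symmetric] comp_def del: prod.lessThan_Suc)
  finally have "det jacobi_F * det jacobi_F = N / W"
    using \<open>N > 0\<close> \<open>W > 0\<close> by (simp add: field_simps)
  then show ?thesis
    by (simp add: N_def W_def prod_dividef atLeast0AtMost lessThan_Suc_atMost)
qed

lemma sgn_det_jacobi_F: "sgn (det jacobi_F) = (-1) ^ (M * (M + 1) div 2)"
proof -
  have "det jacobi_F = (\<Prod>k<M + 1. coeff (jacobi_poly T k) k) * (\<Prod>l<M + 1. \<Prod>j<l. E l - E j)"
    unfolding jacobi_F_def using eigenvalues_inj by (intro det_poly_vandermonde jacobi_poly_degree) simp
  also have "\<dots> = (\<Prod>k<M + 1. coeff (jacobi_poly T k) k) * (-1) ^ (M * (M + 1) div 2)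
                   * (\<Prod>l<M + 1. \<Prod>j<l. E j - E l)"
    using prod_vandermonde_reverse[of E M] by simp
  finally have det_F: "det jacobi_F = \<dots>" .
  define a where "a = (\<Prod>k<M + 1. coeff (jacobi_poly T k) k)"
  define b where "b = (\<Prod>l<M + 1. \<Prod>j<l. E j - E l)"
  have "a > 0"
    unfolding a_def by (intro prod_pos) (auto simp: jacobi_poly_coeff intro!: prod_pos superdiagonal_pos)
  moreover have "b > 0"
    unfolding b_def by (intro prod_pos) (auto simp: eigenvalues_decreasing)
  ultimately show ?thesis
    unfolding det_F a_def[symmetric] b_def[symmetric] by (simp add: sgn_mult)
qed

theorem jacobi_F_inverse:
  defines "G \<equiv> diagm (M + 1) (\<lambda>l. inverse (jacobi_norm l)) * transpose_mat jacobi_F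
                  * diagm (M + 1) (jacobi_weight T)"
  shows "invertible_mat jacobi_F \<and> inverts_mat jacobi_F G \<and> inverts_mat G jacobi_F"
proof -
  have F: "jacobi_F \<in> carrier_mat (M + 1) (M + 1)"
    by (simp add: jacobi_F_def)
  moreover have G: "G \<in> carrier_mat (M + 1) (M + 1)"
    unfolding G_def using F by (intro mult_carrier_mat) auto
  moreover have "G * jacobi_F = 1\<^sub>m (M + 1)"
    unfolding G_def by (rule jacobi_F_left_inverse)
  moreover have "jacobi_F * G = 1\<^sub>m (M + 1)"
    using mat_mult_left_right_inverse[OF G F] calculation by simp
  ultimately show ?thesis
    unfolding invertible_mat_def inverts_mat_def by auto
qed

theorem det_jacobi_F:
  "det jacobi_F = (-1) ^ (M * (M + 1) div 2) * (\<Prod>l\<in>{0..M}. sqrt (jacobi_norm l / jacobi_weight T l))"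
proof -
  have "\<bar>det jacobi_F\<bar> = sqrt (det jacobi_F * det jacobi_F)"
    by (simp add: real_sqrt_mult)
  also have "\<dots> = (\<Prod>l\<in>{0..M}. sqrt (jacobi_norm l / jacobi_weight T l))"
    by (simp add: det_jacobi_F_squared real_sqrt_prod)
  finally show ?thesis
    using sgn_mult_abs[of "det jacobi_F"] by (simp add: sgn_det_jacobi_F)
qed

end

section \<open>Theta products\<close>

lemma continuous_on_prodinf_real:
  fixes f :: "nat \<Rightarrow> 'a :: topological_space \<Rightarrow> real"
  assumes "compact A" and cont: "\<And>n. continuous_on A (f n)"
    and "summable B" and bound: "\<And>n x. x \<in> A \<Longrightarrow> \<bar>f n x - 1\<bar> \<le> B n"
  shows "continuous_on A (\<lambda>x. \<Prod>n. f n x)"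
proof -
  have "uniformly_convergent_on A (\<lambda>N x. \<Sum>n<N. norm (f n x - 1))"
    by (rule Weierstrass_m_test'[where M = B]) (simp_all add: bound \<open>summable B\<close>)
  then have "uniformly_convergent_on A (\<lambda>N x. \<Prod>n<N. f n x)"
    by (rule uniformly_convergent_on_prod'[OF cont \<open>compact A\<close>])
  then obtain g where g: "uniform_limit A (\<lambda>N x. \<Prod>n<N. f n x) g sequentially"
    by (auto simp: uniformly_convergent_on_def)
  have "continuous_on A g"
    by (rule uniform_limit_theorem[OF _ g]) (simp_all add: continuous_on_prod cont)
  moreover have "g x = (\<Prod>n. f n x)" if "x \<in> A" for x
  proof -
    have "summable (\<lambda>n. norm (f n x - 1))"
      by (rule summable_comparison_test'[of B 0]) (simp_all add: bound[OF that] \<open>summable B\<close>)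
    then have "convergent_prod (\<lambda>n. f n x)"
      by (intro abs_convergent_prod_imp_convergent_prod summable_imp_abs_convergent_prod)
    then have "(\<lambda>N. \<Prod>n<N. f n x) \<longlonglongrightarrow> (\<Prod>n. f n x)"
      by (intro has_prod_imp_tendsto' convergent_prod_has_prod)
    moreover have "(\<lambda>N. \<Prod>n<N. f n x) \<longlonglongrightarrow> g x"
      by (rule tendsto_uniform_limitI[OF g that])
    ultimately show ?thesis
      using LIMSEQ_unique by blast
  qed
  ultimately show ?thesis
    by (metis (no_types, lifting) continuous_on_cong)
qed

definition theta_prod :: "real \<Rightarrow> (nat \<Rightarrow> real) \<Rightarrow> real \<Rightarrow> real" where
  "theta_prod p q c = (\<Prod>n. (1 - p ^ (2 * Suc n)) * (1 + 2 * q n * c + q n ^ 2))"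

lemma theta_factor_bounds:
  fixes p q c :: real
  assumes p: "0 < p" "p < 1" and q: "0 \<le> q" "q \<le> p ^ Suc n" and c: "\<bar>c\<bar> \<le> 1"
  shows "(1 - p ^ (2 * Suc n)) * (1 + 2 * q * c + q ^ 2) > 0"
    and "\<bar>(1 - p ^ (2 * Suc n)) * (1 + 2 * q * c + q ^ 2) - 1\<bar> \<le> 4 * p ^ Suc n"
proof -
  define a where "a = p ^ (2 * Suc n)"
  define x where "x = 2 * q * c + q ^ 2"
  have "p ^ Suc n < 1"
    by (rule power_Suc_less_one[OF p])
  have "a \<le> p ^ Suc n"
    unfolding a_def by (rule power_decreasing) (use p in auto)
  then have "a < 1"
    using \<open>p ^ Suc n < 1\<close> by linarith
  have "0 < a"
    using p by (simp add: a_def)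
  have qc: "\<bar>q * c\<bar> \<le> q"
    using q c by (simp add: abs_mult mult_left_le)
  have qq: "q ^ 2 \<le> q"
    using q \<open>p ^ Suc n < 1\<close> by (simp add: power2_eq_square mult_left_le)
  have "1 + x \<ge> (1 - q) ^ 2"
    using qc by (simp add: x_def power2_eq_square algebra_simps abs_le_iff)
  moreover have "(1 - q) ^ 2 > 0"
    using q \<open>p ^ Suc n < 1\<close> by simp
  ultimately have "1 + x > 0"
    by linarith
  then show "(1 - a) * (1 + 2 * q * c + q ^ 2) > 0"
    using \<open>a < 1\<close> by (simp add: x_def add.assoc)
  have "\<bar>(1 - a) * x\<bar> \<le> \<bar>x\<bar>"
    using \<open>0 < a\<close> \<open>a < 1\<close> by (simp add: abs_mult mult_left_le_one_le)
  also have "\<bar>x\<bar> \<le> 2 * \<bar>q * c\<bar> + q ^ 2"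
    unfolding x_def using abs_triangle_ineq[of "2 * q * c" "q ^ 2"] by (simp add: abs_mult)
  also have "\<dots> \<le> 3 * q"
    using qc qq by linarith
  finally have "\<bar>(1 - a) * (1 + x) - 1\<bar> \<le> 3 * q + a"
    using \<open>0 < a\<close> by (simp add: algebra_simps abs_le_iff)
  then show "\<bar>(1 - a) * (1 + 2 * q * c + q ^ 2) - 1\<bar> \<le> 4 * p ^ Suc n"
    using q \<open>a \<le> p ^ Suc n\<close> by (simp add: x_def add.assoc)
qed

lemma summable_theta_bound: "0 < p \<Longrightarrow> p < 1 \<Longrightarrow> summable (\<lambda>n. 4 * p ^ Suc n :: real)"
  by (intro summable_mult summable_mult2 summable_geometric) simp

lemma convergent_prod_theta:
  fixes p c :: real
  assumes p: "0 < p" "p < 1" and q: "\<And>n. 0 \<le> q n" "\<And>n. q n \<le> p ^ Suc n" and "\<bar>c\<bar> \<le> 1"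
  shows "convergent_prod (\<lambda>n. (1 - p ^ (2 * Suc n)) * (1 + 2 * q n * c + q n ^ 2))"
proof -
  have "summable (\<lambda>n. norm ((1 - p ^ (2 * Suc n)) * (1 + 2 * q n * c + q n ^ 2) - 1))"
    using theta_factor_bounds(2)[OF p q(1) q(2) \<open>\<bar>c\<bar> \<le> 1\<close>]
    by (intro summable_comparison_test'[OF summable_theta_bound[OF p], of 0]) simp
  then show ?thesis
    by (intro abs_convergent_prod_imp_convergent_prod summable_imp_abs_convergent_prod)
qed

lemma theta_prod_pos:
  assumes p: "0 < p" "p < 1" and q: "\<And>n. 0 \<le> q n" "\<And>n. q n \<le> p ^ Suc n" and "\<bar>c\<bar> \<le> 1"
  shows "theta_prod p q c > 0"
  unfolding theta_prod_def
  by (rule less_0_prodinf[OF convergent_prod_theta[OF p q \<open>\<bar>c\<bar> \<le> 1\<close>]])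
    (rule theta_factor_bounds(1)[OF p q(1) q(2) \<open>\<bar>c\<bar> \<le> 1\<close>])

lemma continuous_on_theta_prod:
  assumes p: "0 < p" "p < 1" and q: "\<And>n. 0 \<le> q n" "\<And>n. q n \<le> p ^ Suc n"
  shows "continuous_on {-1..1} (theta_prod p q)"
  unfolding theta_prod_def[abs_def]
proof (rule continuous_on_prodinf_real[OF _ _ summable_theta_bound[OF p]])
  show "\<bar>(1 - p ^ (2 * Suc n)) * (1 + 2 * q n * c + q n ^ 2) - 1\<bar> \<le> 4 * p ^ Suc n"
    if "c \<in> {-1..1}" for n c
    using that by (intro theta_factor_bounds(2)[OF p q(1) q(2)]) auto
qed (auto intro!: continuous_intros)

lemma theta_nome_bounds:
  fixes p :: real
  assumes "0 < p" "p < 1"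
  shows "0 \<le> p ^ (2 * Suc n)" "p ^ (2 * Suc n) \<le> p ^ Suc n"
    and "0 \<le> p ^ (2 * Suc n - 1)" "p ^ (2 * Suc n - 1) \<le> p ^ Suc n"
  using assms by (simp_all add: power_decreasing del: power_Suc)

lemma power_square_nome:
  fixes p :: real
  shows "(p ^ (2 * Suc n)) ^ 2 = p ^ (4 * Suc n)" "(p ^ (2 * Suc n - 1)) ^ 2 = p ^ (4 * Suc n - 2)"
proof -
  have "4 * Suc n = 2 * Suc n * 2" "4 * Suc n - 2 = (2 * Suc n - 1) * 2" by simp_all
  then show "(p ^ (2 * Suc n)) ^ 2 = p ^ (4 * Suc n)" "(p ^ (2 * Suc n - 1)) ^ 2 = p ^ (4 * Suc n - 2)"
    by (simp_all only: power_mult)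
qed

lemma theta1_eq: "theta1 p z = 2 * p powr (1/4) * sin z * theta_prod p (\<lambda>n. p ^ (2 * Suc n)) (- cos (2 * z))"
  unfolding theta1_def theta_prod_def power_square_nome by simp

lemma theta2_eq: "theta2 p z = 2 * p powr (1/4) * cos z * theta_prod p (\<lambda>n. p ^ (2 * Suc n)) (cos (2 * z))"
  unfolding theta2_def theta_prod_def power_square_nome by simp

lemma theta3_eq: "theta3 p z = theta_prod p (\<lambda>n. p ^ (2 * Suc n - 1)) (cos (2 * z))"
  unfolding theta3_def theta_prod_def power_square_nome by simp

lemma theta4_eq: "theta4 p z = theta_prod p (\<lambda>n. p ^ (2 * Suc n - 1)) (- cos (2 * z))"
  unfolding theta4_def theta_prod_def power_square_nome by simp

lemma theta_prod_nome_pos: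
  fixes p :: real
  assumes "0 < p" "p < 1" "\<bar>c\<bar> \<le> 1"
  shows "theta_prod p (\<lambda>n. p ^ (2 * Suc n)) c > 0"
    and "theta_prod p (\<lambda>n. p ^ (2 * Suc n - 1)) c > 0"
  using assms theta_nome_bounds[OF assms(1,2)] by (intro theta_prod_pos assms; simp)+

lemma theta1_pos: "0 < p \<Longrightarrow> p < 1 \<Longrightarrow> 0 < z \<Longrightarrow> z < pi \<Longrightarrow> theta1 p z > 0"
  unfolding theta1_eq by (intro mult_pos_pos sin_gt_zero theta_prod_nome_pos) auto

lemma theta2_pos: "0 < p \<Longrightarrow> p < 1 \<Longrightarrow> \<bar>z\<bar> < pi / 2 \<Longrightarrow> theta2 p z > 0"
  unfolding theta2_eq by (intro mult_pos_pos cos_gt_zero_pi theta_prod_nome_pos) auto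

lemma theta3_pos: "0 < p \<Longrightarrow> p < 1 \<Longrightarrow> theta3 p z > 0"
  unfolding theta3_eq by (intro theta_prod_nome_pos) auto

lemma theta4_pos: "0 < p \<Longrightarrow> p < 1 \<Longrightarrow> theta4 p z > 0"
  unfolding theta4_eq by (intro theta_prod_nome_pos) auto

lemma theta1_has_derivative_0:
  fixes p :: real
  assumes "0 < p" "p < 1"
  shows "(theta1 p has_real_derivative 2 * p powr (1/4) * theta_prod p (\<lambda>n. p ^ (2 * Suc n)) (-1)) (at 0)"
proof -
  let ?P = "theta_prod p (\<lambda>n. p ^ (2 * Suc n))"
  have "((\<lambda>y. sin y / y) \<longlongrightarrow> 1) (at (0 :: real))"
    using DERIV_sin[of 0] by (simp add: has_field_derivative_iff)
  moreover have "((\<lambda>y. ?P (- cos (2 * y))) \<longlongrightarrow> ?P (-1)) (at 0)"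
  proof (rule continuous_on_tendsto_compose[OF continuous_on_theta_prod])
    show "((\<lambda>y. - cos (2 * y)) \<longlongrightarrow> -1) (at (0 :: real))"
      by (rule tendsto_eq_intros refl | simp)+
  qed (use assms theta_nome_bounds[OF assms] in auto)
  ultimately have "((\<lambda>y. 2 * p powr (1/4) * (sin y / y) * ?P (- cos (2 * y)))
      \<longlongrightarrow> 2 * p powr (1/4) * 1 * ?P (-1)) (at 0)"
    by (intro tendsto_intros)
  then show ?thesis
    by (simp add: has_field_derivative_iff theta1_eq)
qed

lemma deriv_theta1_pos: "0 < p \<Longrightarrow> p < 1 \<Longrightarrow> deriv (theta1 p) 0 > 0"
  using DERIV_imp_deriv[OF theta1_has_derivative_0] theta_prod_nome_pos[of p "-1"] by simp

lemma theta_reflect: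
  "theta1 p (pi / 2 - y) = theta2 p y" "theta2 p (pi / 2 - y) = theta1 p y"
  "theta3 p (pi / 2 - y) = theta4 p y" "theta4 p (pi / 2 - y) = theta3 p y"
proof -
  have "cos (2 * (pi / 2 - y)) = - cos (2 * y)"
    by (simp add: right_diff_distrib cos_diff)
  then show "theta1 p (pi / 2 - y) = theta2 p y" "theta2 p (pi / 2 - y) = theta1 p y"
    "theta3 p (pi / 2 - y) = theta4 p y" "theta4 p (pi / 2 - y) = theta3 p y"
    by (simp_all add: theta1_eq theta2_eq theta3_eq theta4_eq sin_diff cos_diff)
qed

section \<open>The elliptic Racah matrix\<close>

definition theta :: "real \<Rightarrow> nat \<Rightarrow> real \<Rightarrow> real" where
  "theta p r = (if r = 1 then theta1 p else if r = 2 then theta2 p else if r = 3 then theta3 p else theta4 p)"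

definition brk_scale :: "real \<Rightarrow> real \<Rightarrow> nat \<Rightarrow> real" where
  "brk_scale p \<alpha> r = (if r = 1 then \<alpha> / 2 * deriv (theta1 p) 0 else theta p r 0)"

lemma brk_eq: "brk p \<alpha> r z = theta p r (\<alpha> / 2 * z) / brk_scale p \<alpha> r"
  by (simp add: brk_def theta_def brk_scale_def)

lemma brk_scale_pos: "0 < p \<Longrightarrow> p < 1 \<Longrightarrow> 0 < \<alpha> \<Longrightarrow> brk_scale p \<alpha> r > 0"
  by (simp add: brk_scale_def theta_def deriv_theta1_pos theta2_pos theta3_pos theta4_pos)

lemma theta_reflect_perm: "r \<in> {1..4} \<Longrightarrow> theta p r (pi / 2 - y) = theta p (perm4 2 r) y"
  by (auto simp: theta_def perm4_def theta_reflect)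

lemma atLeastAtMost_nat_four: "{1..4 :: nat} = {1, 2, 3, 4}"
  by auto

lemma perm4_2_involution [simp]: "perm4 2 (perm4 2 r) = r"
  by (simp add: perm4_def)

lemma perm4_2_comp: "r \<in> {1..4} \<Longrightarrow> perm4 2 (perm4 r s) = perm4 (perm4 2 r) s"
  by (auto simp: perm4_def)

lemma alph_swap: "alph (us \<circ> perm4 2) M = alph us M"
  by (simp add: alph_def perm4_def)

lemma acoef_swap: "acoef p (us \<circ> perm4 2) (vs \<circ> perm4 2) M k = atcoef p us vs M k"
  by (simp add: acoef_def atcoef_def alph_swap perm4_def)

lemma atcoef_swap: "atcoef p (us \<circ> perm4 2) (vs \<circ> perm4 2) M k = acoef p us vs M k"
  by (simp add: acoef_def atcoef_def alph_swap) (simp add: perm4_def)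

lemma cr_swap: "r \<in> {1..4} \<Longrightarrow> cr p (us \<circ> perm4 2) (vs \<circ> perm4 2) M u r = cr p us vs M u (perm4 2 r)"
  unfolding cr_def alph_swap Let_def
  by (intro arg_cong2[where f = "(*)"] refl prod.cong) (simp_all add: perm4_2_comp)

definition brk_quot :: "real \<Rightarrow> real \<Rightarrow> nat \<Rightarrow> real \<Rightarrow> real \<Rightarrow> real" where
  "brk_quot p \<alpha> r x w = brk p \<alpha> r (x + w) * brk p \<alpha> r (x - w) / (brk p \<alpha> r (x + 1/2) * brk p \<alpha> r (x - 1/2))"

lemma bcoef_eq:
  "bcoef p us vs M u k = (\<Sum>r\<in>{1..4}. cr p us vs M u r * brk_quot p (alph us M) r (us 1 + real k) (1/2 + u))"
  unfolding bcoef_def Let_def brk_quot_def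
  by (intro sum.cong refl) (simp add: algebra_simps)

locale elliptic_racah =
  fixes p :: real and us vs :: "nat \<Rightarrow> real" and M :: nat
  assumes nome: "0 < p" "p < 1"
    and u1: "us 1 > 0" and u2: "us 2 > 0"
    and v1: "\<bar>vs 1\<bar> < us 1 + 1/2" and v2: "\<bar>vs 2\<bar> < us 2 + 1/2"
begin

definition S :: real where
  "S = us 1 + us 2 + real M"

lemma S_pos: "S > 0"
  using u1 u2 by (simp add: S_def)

lemma alph_eq: "alph us M = pi / S"
  by (simp add: alph_def S_def)

lemma alph_pos: "alph us M > 0"
  using S_pos by (simp add: alph_eq)

definition brk_domain :: "nat \<Rightarrow> real \<Rightarrow> bool" where
  "brk_domain r x \<longleftrightarrow> (r = 1 \<longrightarrow> 0 < x \<and> x < 2 * S) \<and> (r = 2 \<longrightarrow> -S < x \<and> x < S)"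

lemma brk_pos:
  assumes "r \<in> {1..4}" and "brk_domain r x"
  shows "brk p (alph us M) r x > 0"
proof -
  have scale: "alph us M / 2 * x = pi * (x / (2 * S))"
    using S_pos by (simp add: alph_eq)
  consider "r = 1" | "r = 2" | "r = 3 \<or> r = 4"
    using assms(1) by fastforce
  then have "theta p r (alph us M / 2 * x) > 0"
  proof cases
    case 1
    then have "0 < x / (2 * S)" "x / (2 * S) < 1"
      using assms(2) S_pos by (simp_all add: brk_domain_def)
    then have "0 < pi * (x / (2 * S))" "pi * (x / (2 * S)) < pi"
      using mult_strict_left_mono[of "x / (2 * S)" 1 pi] mult_pos_pos[of pi "x / (2 * S)"]
      by simp_all
    then have "theta1 p (pi * (x / (2 * S))) > 0"
      by (intro theta1_pos nome)
    then show ?thesis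
      using 1 unfolding theta_def scale by simp
  next
    case 2
    then have "\<bar>x / (2 * S)\<bar> < 1 / 2"
      using assms(2) S_pos by (simp add: brk_domain_def abs_less_iff)
    then have "\<bar>pi * (x / (2 * S))\<bar> < pi / 2"
      using mult_strict_left_mono[of "\<bar>x / (2 * S)\<bar>" "1 / 2" pi] by (simp add: abs_mult)
    then have "theta2 p (pi * (x / (2 * S))) > 0"
      by (intro theta2_pos nome)
    then show ?thesis
      using 2 unfolding theta_def scale by simp
  next
    case 3
    then show ?thesis
      using nome by (auto simp: theta_def theta3_pos theta4_pos)
  qed
  then show ?thesis
    using nome alph_pos by (simp add: brk_eq brk_scale_pos)
qed

lemma acoef_pos:
  assumes "1 \<le> k" "k \<le> M"
  shows "acoef p us vs M k > 0"
  unfolding acoef_def Let_def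
proof (rule prod_pos)
  fix r :: nat assume r: "r \<in> {1..4}"
  have "1 \<le> real k" "real k \<le> real M"
    using assms by simp_all
  then have "brk_domain r (us 1 - us r + real k)" "brk_domain r (us 1 - vs r - 1 / 2 + real k)"
    "brk_domain r (us 1 + real k)" "brk_domain r (us 1 - 1 / 2 + real k)"
    using u1 u2 v1 v2 by (auto simp: brk_domain_def S_def abs_less_iff)
  then show "0 < brk p (alph us M) r (us 1 - us r + real k) * brk p (alph us M) r (us 1 - vs r - 1 / 2 + real k)
        / (brk p (alph us M) r (us 1 + real k) * brk p (alph us M) r (us 1 - 1 / 2 + real k))"
    using r by (intro mult_pos_pos divide_pos_pos brk_pos)
qed

lemma elliptic_racah_swapped: "elliptic_racah p (us \<circ> perm4 2) (vs \<circ> perm4 2)"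
  using nome u1 u2 v1 v2 by unfold_locales (simp_all add: perm4_def)

lemma atcoef_pos: "1 \<le> k \<Longrightarrow> k \<le> M \<Longrightarrow> atcoef p us vs M k > 0"
  using elliptic_racah.acoef_pos[OF elliptic_racah_swapped, of k M] by (simp add: acoef_swap)

lemma brk_reflect:
  assumes "r \<in> {1..4}"
  shows "brk p (alph us M) r (S - x)
      = brk_scale p (alph us M) (perm4 2 r) / brk_scale p (alph us M) r * brk p (alph us M) (perm4 2 r) x"
proof -
  have "alph us M / 2 * (S - x) = pi / 2 - alph us M / 2 * x"
    using S_pos by (simp add: alph_eq field_simps)
  then have "theta p r (alph us M / 2 * (S - x)) = theta p (perm4 2 r) (alph us M / 2 * x)"
    by (simp only: theta_reflect_perm[OF assms])
  moreover have "brk_scale p (alph us M) (perm4 2 r) \<noteq> 0"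
    using brk_scale_pos[OF nome alph_pos] by (simp add: less_imp_neq[symmetric])
  ultimately show ?thesis
    by (simp add: brk_eq)
qed

lemma brk_quot_reflect:
  assumes "r \<in> {1..4}"
  shows "brk_quot p (alph us M) r (S - y) w = brk_quot p (alph us M) (perm4 2 r) y w"
proof -
  define \<kappa> where "\<kappa> = brk_scale p (alph us M) (perm4 2 r) / brk_scale p (alph us M) r"
  have "\<kappa> \<noteq> 0"
    using brk_scale_pos[OF nome alph_pos, of r] brk_scale_pos[OF nome alph_pos, of "perm4 2 r"]
    by (simp add: \<kappa>_def)
  have cancel: "(\<kappa> * a) * (\<kappa> * b) / ((\<kappa> * c) * (\<kappa> * d)) = (a * b) / (c * d)" for a b c d
    using \<open>\<kappa> \<noteq> 0\<close> by (cases "c * d = 0") (auto simp: field_simps)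
  have shift: "S - y + t = S - (y - t)" "S - y - t = S - (y + t)" for t
    by simp_all
  show ?thesis
    unfolding brk_quot_def shift
    unfolding brk_reflect[OF assms] \<kappa>_def[symmetric] cancel by (simp only: mult.commute)
qed

lemma bcoef_swap:
  assumes "k \<le> M"
  shows "bcoef p (us \<circ> perm4 2) (vs \<circ> perm4 2) M u k = bcoef p us vs M u (M - k)"
proof -
  let ?q = "\<lambda>r. brk_quot p (alph us M) r (us 2 + real k) (1/2 + u)"
  have "(us \<circ> perm4 2) 1 = us 2"
    by (simp add: perm4_def)
  then have "bcoef p (us \<circ> perm4 2) (vs \<circ> perm4 2) M u k = (\<Sum>r\<in>{1..4}. cr p us vs M u (perm4 2 r) * ?q r)"
    unfolding bcoef_eq alph_swap by (intro sum.cong refl) (simp add: cr_swap)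
  also have "\<dots> = (\<Sum>r\<in>{1..4}. cr p us vs M u r * ?q (perm4 2 r))"
    unfolding atLeastAtMost_nat_four by (simp add: perm4_def add_ac)
  also have "\<dots> = bcoef p us vs M u (M - k)"
  proof -
    have "us 1 + real (M - k) = S - (us 2 + real k)"
      using assms by (simp add: S_def of_nat_diff)
    then show ?thesis
      unfolding bcoef_eq by (intro sum.cong refl) (simp add: brk_quot_reflect)
  qed
  finally show ?thesis .
qed

lemma Hent_swap:
  assumes "i \<le> M" and "j \<le> M"
  shows "Hent p (us \<circ> perm4 2) (vs \<circ> perm4 2) M u i j = Hent p us vs M u (M - i) (M - j)"
proof -
  consider "i = j" | "i = j + 1" | "j = i + 1" | "i \<noteq> j" "i \<noteq> j + 1" "j \<noteq> i + 1"
    by blast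
  then show ?thesis
  proof cases
    case 1
    then show ?thesis using assms by (simp add: Hent_def bcoef_swap)
  next
    case 2
    then have "M - j = M - i + 1" using assms by simp
    then show ?thesis using 2 assms by (simp add: Hent_def acoef_swap)
  next
    case 3
    then have "M - i = M - j + 1" using assms by simp
    then show ?thesis using 3 assms by (simp add: Hent_def atcoef_swap)
  next
    case 4
    then have "M - i \<noteq> M - j" "M - i \<noteq> M - j + 1" "M - j \<noteq> M - i + 1"
      using assms by auto
    then show ?thesis using 4 by (simp add: Hent_def)
  qed
qed

end

lemma Hent_tridiagonal: "Suc i < j \<Longrightarrow> Hent p us vs M u i j = 0 \<and> Hent p us vs M u j i = 0"
  by (simp add: Hent_def)

lemma Hent_sub: "Hent p us vs M u (Suc k) k = acoef p us vs M (Suc k)"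
  by (simp add: Hent_def)

lemma Hent_super: "Hent p us vs M u k (Suc k) = atcoef p us vs M (M - k)"
  by (simp add: Hent_def)

lemma prod_Hent_sub: "(\<Prod>l\<in>{1..M}. Hent p us vs M u l (l - 1)) = (\<Prod>l\<in>{1..M}. acoef p us vs M l)"
proof (rule prod.cong)
  show "Hent p us vs M u l (l - 1) = acoef p us vs M l" if "l \<in> {1..M}" for l
    using Hent_sub[of p us vs M u "l - 1"] that by simp
qed simp

lemma prod_inverse_Hent_reversed:
  "(\<Prod>i<M. inverse (Hent p us vs M u (M - i) (M - Suc i))) = inverse (\<Prod>l\<in>{1..M}. acoef p us vs M l)"
proof -
  have "(\<Prod>i<M. inverse (Hent p us vs M u (M - i) (M - Suc i)))
      = (\<Prod>i<M. inverse (acoef p us vs M (Suc (M - Suc i))))"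
  proof (rule prod.cong)
    show "inverse (Hent p us vs M u (M - i) (M - Suc i)) = inverse (acoef p us vs M (Suc (M - Suc i)))"
      if "i \<in> {..<M}" for i
      using Hent_sub[of p us vs M u "M - Suc i"] that by (simp add: Suc_diff_Suc)
  qed simp
  also have "\<dots> = (\<Prod>i<M. inverse (acoef p us vs M (Suc i)))"
    by (rule prod.nat_diff_reindex)
  also have "\<dots> = inverse (\<Prod>l\<in>{1..M}. acoef p us vs M l)"
    by (simp add: prod.atLeast1_atMost_eq prod_inversef[symmetric] comp_def)
  finally show ?thesis .
qed

lemma ppoly_eq_char_minor: "ppoly p us vs M u k E = poly (char_minor (Hent p us vs M u) k) E"
  by (simp add: ppoly_def poly_char_minor)

lemma fpoly_eq_jacobi_poly: "fpoly p us vs M u k E = poly (jacobi_poly (Hent p us vs M u) k) E"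
  by (simp add: fpoly_def jacobi_poly_def ppoly_eq_char_minor Hent_super)

lemma Delta_eq_jacobi_weight: "Delta p us vs M = jacobi_weight (Hent p us vs M u)"
proof
  fix k
  have "Hent p us vs M u (l - 1) l = atcoef p us vs M (M + 1 - l)"
    and "Hent p us vs M u l (l - 1) = acoef p us vs M l" if "l \<in> {1..k}" for l
    using that Hent_super[of p us vs M u "l - 1"] Hent_sub[of p us vs M u "l - 1"] by simp_all
  then show "Delta p us vs M k = jacobi_weight (Hent p us vs M u) k"
    unfolding Delta_def jacobi_weight_def by (intro prod.cong) simp_all
qed

lemma char_minor_Hmat:
  "eigenvalue (Hmat p us vs M u) E \<Longrightarrow> poly (char_minor (Hent p us vs M u) (Suc M)) E = 0"
  unfolding char_minor_def Hmat_def
  by (subst (asm) eigenvalue_root_char_poly[of _ "Suc M"]) simp_all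

lemma (in elliptic_racah) epsn_eq_reversed:
  "epsn p us vs M u E j = poly (jacobi_poly (\<lambda>i j. Hent p us vs M u (M - i) (M - j)) M) (E j)"
proof -
  have "char_minor (\<lambda>i j. Hent p us vs M u (M - i) (M - j)) M
      = char_minor (Hent p (us \<circ> perm4 2) (vs \<circ> perm4 2) M u) M"
    by (rule char_minor_cong) (simp add: Hent_swap)
  then show ?thesis
    by (simp add: epsn_def jacobi_poly_def ppoly_eq_char_minor prod_inverse_Hent_reversed
        divide_inverse mult.commute)
qed

lemma (in elliptic_racah) jacobi_spectrum_Hent:
  assumes "\<And>i j. i < j \<Longrightarrow> j \<le> M \<Longrightarrow> E j < E i"
    and "\<And>j. j \<le> M \<Longrightarrow> eigenvalue (Hmat p us vs M u) (E j)"
  shows "jacobi_spectrum (Hent p us vs M u) M E"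
proof unfold_locales
  show "Hent p us vs M u (Suc k) k > 0" "Hent p us vs M u k (Suc k) > 0" if "k < M" for k
    using that acoef_pos[of "Suc k"] atcoef_pos[of "M - k"] by (simp_all add: Hent_sub Hent_super)
qed (use assms char_minor_Hmat Hent_tridiagonal in auto)

lemma (in elliptic_racah) Nrm_eq_jacobi_norm:
  assumes "jacobi_spectrum (Hent p us vs M u) M E"
  shows "Nrm p us vs M u E = jacobi_spectrum.jacobi_norm (Hent p us vs M u) M E"
  unfolding Nrm_def jacobi_spectrum.jacobi_norm_def[OF assms, abs_def]
    jacobi_spectrum.T_rev_def[OF assms, abs_def] epsn_eq_reversed prod_Hent_sub ..

lemma Fmat_eq_jacobi_F:
  assumes "jacobi_spectrum (Hent p us vs M u) M E"
  shows "Fmat p us vs M u E = jacobi_spectrum.jacobi_F (Hent p us vs M u) M E"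
  by (rule eq_matI) (simp_all add: Fmat_def jacobi_spectrum.jacobi_F_def[OF assms] fpoly_eq_jacobi_poly)

text \<open>The hypotheses on \<open>u\<close> only make the constants \<open>c\<^sub>r\<close> finite.\<close>

theorem mainTheorem8:
  fixes p u :: real and us vs :: "nat \<Rightarrow> real" and M :: nat and E :: "nat \<Rightarrow> real"
  assumes "0 < p" and "p < 1"
    and "us 1 > 0" and "us 2 > 0"
    and "\<bar>vs 1\<bar> < us 1 + 1/2" and "\<bar>vs 2\<bar> < us 2 + 1/2"
    and "\<forall>n::int. u \<noteq> 2 * pi / alph us M * of_int n"
    and "\<forall>n::int. u + 1 \<noteq> 2 * pi / alph us M * of_int n"
    and E_decr: "\<forall>i j. i < j \<longrightarrow> j \<le> M \<longrightarrow> E j < E i"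
    and E_eig: "\<forall>j\<le>M. eigenvalue (Hmat p us vs M u) (E j)"
  shows "let F = Fmat p us vs M u E;
             G = diagm (M + 1) (\<lambda>l. inverse (Nrm p us vs M u E l)) * transpose_mat F
                 * diagm (M + 1) (Delta p us vs M)
         in invertible_mat F \<and> inverts_mat F G \<and> inverts_mat G F \<and>
            det F = (-1) ^ (M * (M + 1) div 2) *
                    (\<Prod>l\<in>{0..M}. sqrt (Nrm p us vs M u E l / Delta p us vs M l))"
proof -
  have ell: "elliptic_racah p us vs"
    using assms by unfold_locales
  have J: "jacobi_spectrum (Hent p us vs M u) M E"
    using elliptic_racah.jacobi_spectrum_Hent[OF ell] E_decr E_eig by blast
  show ?thesis
    using jacobi_spectrum.jacobi_F_inverse[OF J] jacobi_spectrum.det_jacobi_F[OF J]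
    by (simp add: Fmat_eq_jacobi_F[OF J] elliptic_racah.Nrm_eq_jacobi_norm[OF ell J]
        Delta_eq_jacobi_weight[of _ _ _ _ u])
qed

end
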